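(* In the standing setting, let $k\in\mathbb{N}$, let $X',T\subseteq X$ and let $c$ be a colour such that $X'$ is $(2k,T,c)$-free. Let $\sigma=(e_0,m_1,e_1,\dots,e_{\ell-1},m_\ell)$ be an $X'$-switching from $c$ to $(m_\ell)_C$ of length $\ell\leq k$. Let $A$ be a set of at most $k$ edges of $M\setminus\{(c)_M\}$ and let $B\subseteq X'$ with $|B|\leq k$. Suppose $(\sigma)_X\cap T=\emptyset$, $(\sigma)_X\cap(A)_X=\emptyset$, $(\sigma)_X\cap B=\emptyset$, $T\cap(A)_X=\emptyset$ and $(A)_X\cap B=\emptyset$. Then there is a rainbow matching $\tilde M$ of size $n$ in $G$ which contains no edge of colour $(m_\ell)_C$, contains every edge of $A$, and covers no vertex of $(m(\sigma))_X\cup B$.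
   Context: Standing setting: $G$ is a bipartite graph with bipartition classes $X,Y$ which is the union of $n+1$ pairwise edge-disjoint matchings; these matchings are the colours, and the colour of an edge is the matching containing it. A matching is rainbow if its edges have distinct colours. $M$ is a rainbow matching of size $n$ in $G$, and $c^*$ is the unique colour not used by $M$. Notation: for an edge $e$, $(e)_C$ is its colour, $(e)_X=e\cap X$, $(e)_Y=e\cap Y$. For $x\in X$ covered by $M$: $(x)_M$ is the edge of $M$ at $x$, $(x)_C$ its colour, $(x)_Y$ its endpoint in $Y$ (undefined if $x$ is not covered). Analogously $(y)_M,(y)_C,(y)_X$ for $y\in Y$. For a colour $c\neq c^*$: $(c)_M$ is the colour-$c$ edge of $M$, $(c)_X=(c)_M\cap X$, $(c)_Y=(c)_M\cap Y$ (undefined for $c^*$). For a set $S$ of such objects, $(S)_M,(S)_X,(S)_Y,(S)_C$ are the sets of the defined images of its elements. Free sets: for $X',T\subseteq X$, a real $k\ge 0$ and a colour $c$, $X'$ is $(k,T,c)$-free if $T\cap X'=\emptyset$, $c\notin(X'\cup T)_C$, and for every set $A$ of at most $k$ edges of $M\setminus((T)_M\cup\{(c)_M\})$ and every $B\subseteq X'$ with $|B|\le k$ and $(A)_X\cap B=\emptyset$, there is a rainbow matching $M'$ of size $n$ in $G$ containing every edge of $A$, covering no vertex of $B$, and containing no edge of colour $c$. Switchings: for $X'\subseteq X$, a sequence of edges $\sigma=(e_0,m_1,e_1,m_2,\dots,e_{\ell-1},m_\ell)$ with $\ell\ge1$ is an $X'$-switching if (i) each $m_i\in M$ and each $e_i\notin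 M$; (ii) for each $i$, $m_i$ and $e_i$ have the same colour $c_i$ (where $c_0$ is the colour of $e_0$ and $c_\ell$ that of $m_\ell$); (iii) for each $i$, $e_{i-1}\cap m_i=\{(m_i)_Y\}$; (iv) for all $i\neq j$: $e_i\cap e_j=\emptyset$, $e_{i-1}\cap m_j=\emptyset$, and $c_i\neq c_j$; (v) $(e_i)_X\in X'$ for each $i$. It is a switching from $c_0$ to $c_\ell$ of length $\ell$. Write $e(\sigma)=\{e_0,\dots,e_{\ell-1}\}$, $m(\sigma)=\{m_1,\dots,m_\ell\}$, $(\sigma)_X=(e(\sigma))_X\cup(m(\sigma))_X$. *)

theory Defs
  imports Complex_Main
begin

text \<open>Edges of the bipartite (multi)graph G are triples (x, y, c) with x in X, y in Y
  and c the colour (= the matching containing the edge).\<close>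

type_synonym ('v, 'c) cedge = "'v \<times> 'v \<times> 'c"

definition ex :: "('v, 'c) cedge \<Rightarrow> 'v" where "ex e = fst e"
definition ey :: "('v, 'c) cedge \<Rightarrow> 'v" where "ey e = fst (snd e)"
definition ecol :: "('v, 'c) cedge \<Rightarrow> 'c" where "ecol e = snd (snd e)"
definition verts :: "('v, 'c) cedge \<Rightarrow> 'v set" where "verts e = {ex e, ey e}"

definition bip_setting ::
  "'v set \<Rightarrow> 'v set \<Rightarrow> 'c set \<Rightarrow> ('v, 'c) cedge set \<Rightarrow> nat \<Rightarrow> bool" where
  "bip_setting X Y C E n \<longleftrightarrow>
     finite X \<and> finite Y \<and> X \<inter> Y = {} \<and> finite C \<and> card C = n + 1 \<and>
     E \<subseteq> X \<times> Y \<times> C \<and>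
     (\<forall>e\<in>E. \<forall>f\<in>E. e \<noteq> f \<and> ecol e = ecol f \<longrightarrow> verts e \<inter> verts f = {})"

definition is_matching :: "('v, 'c) cedge set \<Rightarrow> bool" where
  "is_matching F \<longleftrightarrow> (\<forall>e\<in>F. \<forall>f\<in>F. e \<noteq> f \<longrightarrow> verts e \<inter> verts f = {})"

definition is_rainbow :: "('v, 'c) cedge set \<Rightarrow> bool" where
  "is_rainbow F \<longleftrightarrow> inj_on ecol F"

definition rainbow_matching :: "('v, 'c) cedge set \<Rightarrow> nat \<Rightarrow> ('v, 'c) cedge set \<Rightarrow> bool" where
  "rainbow_matching E n F \<longleftrightarrow> F \<subseteq> E \<and> is_matching F \<and> is_rainbow F \<and> card F = n"

definition covers :: "('v, 'c) cedge set \<Rightarrow> 'v \<Rightarrow> bool" where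
  "covers F v \<longleftrightarrow> (\<exists>e\<in>F. v \<in> verts e)"

text \<open>X' is (k,T,c)-free (with respect to the rainbow matching M of size n).
  (c)_M is rendered as the set of M-edges of colour c (empty for c = c*),
  (S)_M for S a subset of X as the M-edges with X-endpoint in S, and (S)_C as their colours.\<close>
definition free ::
  "('v, 'c) cedge set \<Rightarrow> nat \<Rightarrow> ('v, 'c) cedge set \<Rightarrow> real \<Rightarrow> 'v set \<Rightarrow> 'c \<Rightarrow> 'v set \<Rightarrow> bool" where
  "free E n M k T c X' \<longleftrightarrow>
     T \<inter> X' = {} \<and>
     c \<notin> ecol ` {e \<in> M. ex e \<in> X' \<union> T} \<and>
     (\<forall>A B. A \<subseteq> M - ({e \<in> M. ex e \<in> T} \<union> {e \<in> M. ecol e = c}) \<longrightarrow>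
        real (card A) \<le> k \<longrightarrow> B \<subseteq> X' \<longrightarrow> real (card B) \<le> k \<longrightarrow> ex ` A \<inter> B = {} \<longrightarrow>
        (\<exists>M'. rainbow_matching E n M' \<and> A \<subseteq> M' \<and> (\<forall>v\<in>B. \<not> covers M' v) \<and>
              (\<forall>e\<in>M'. ecol e \<noteq> c)))"

text \<open>Switching sigma = (e_0, m_1, e_1, ..., e_{l-1}, m_l) as two lists of length l:
  es ! i = e_i (i < l) and ms ! i = m_{i+1} (i < l).
  sw_col es ms i is the colour c_i for 0 <= i <= l.\<close>
definition sw_col :: "('v, 'c) cedge list \<Rightarrow> ('v, 'c) cedge list \<Rightarrow> nat \<Rightarrow> 'c" where
  "sw_col es ms i = (if i < length es then ecol (es ! i) else ecol (ms ! (length ms - 1)))"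

definition switching ::
  "('v, 'c) cedge set \<Rightarrow> ('v, 'c) cedge set \<Rightarrow> 'v set \<Rightarrow>
   ('v, 'c) cedge list \<Rightarrow> ('v, 'c) cedge list \<Rightarrow> bool" where
  "switching E M X' es ms \<longleftrightarrow>
     length es = length ms \<and> 1 \<le> length ms \<and>
     (\<forall>i < length ms. ms ! i \<in> M \<and> es ! i \<in> E \<and> es ! i \<notin> M) \<and>
     (\<forall>i. 1 \<le> i \<and> i < length ms \<longrightarrow> ecol (ms ! (i - 1)) = ecol (es ! i)) \<and>
     (\<forall>i < length ms. verts (es ! i) \<inter> verts (ms ! i) = {ey (ms ! i)}) \<and>
     (\<forall>i < length ms. \<forall>j < length ms. i \<noteq> j \<longrightarrow>
        verts (es ! i) \<inter> verts (es ! j) = {} \<and> verts (es ! i) \<inter> verts (ms ! j) = {}) \<and>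
     (\<forall>i \<le> length ms. \<forall>j \<le> length ms. i \<noteq> j \<longrightarrow> sw_col es ms i \<noteq> sw_col es ms j) \<and>
     (\<forall>i < length ms. ex (es ! i) \<in> X')"

end

theory Submission
  imports Defs
begin

text \<open>Apply the freeness of X' once, with the edges of m(\<sigma>) added to A and the X-endpoints
  of e(\<sigma>) added to B: this gives a rainbow matching M' of size n that avoids colour c,
  contains m(\<sigma>) and leaves the X-endpoints of the e_i uncovered. Swapping m(\<sigma>) for e(\<sigma>)
  in M' keeps it a matching (each e_i takes over the Y-endpoint of m_i), and keeps it
  rainbow with the same size: colour c enters with e_0, each e_i with i > 0 has the colour
  of m_{i-1}, and the colour of m_\<ell> leaves.\<close>

definition switch_along ::
  "('v, 'c) cedge set \<Rightarrow> ('v, 'c) cedge list \<Rightarrow> ('v, 'c) cedge list \<Rightarrow> ('v, 'c) cedge set" where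
  "switch_along F es ms = (F - set ms) \<union> set es"

lemma bip_setting_finite_edges: "bip_setting X Y C E n \<Longrightarrow> finite E"
  unfolding bip_setting_def by (meson finite_SigmaI finite_subset)

lemma bip_setting_disjoint: "bip_setting X Y C E n \<Longrightarrow> X \<inter> Y = {}"
  unfolding bip_setting_def by blast

lemma bip_setting_endpoints:
  assumes "bip_setting X Y C E n" "e \<in> E"
  shows "ex e \<in> X" "ey e \<in> Y"
  using assms unfolding bip_setting_def ex_def ey_def by auto

lemma is_matching_subset: "is_matching F \<Longrightarrow> G \<subseteq> F \<Longrightarrow> is_matching G"
  unfolding is_matching_def by blast

lemma is_matching_Un:
  assumes "is_matching F" "is_matching G" "\<And>e g. e \<in> F \<Longrightarrow> g \<in> G \<Longrightarrow> verts e \<inter> verts g = {}"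
  shows "is_matching (F \<union> G)"
  using assms unfolding is_matching_def by (metis Int_commute Un_iff)

lemma is_rainbow_Un:
  assumes "is_rainbow F" "is_rainbow G" "ecol ` F \<inter> ecol ` G = {}"
  shows "is_rainbow (F \<union> G)"
proof -
  have "ecol ` (F - G) \<inter> ecol ` (G - F) \<subseteq> ecol ` F \<inter> ecol ` G"
    by (intro Int_mono image_mono Diff_subset)
  then show ?thesis using assms unfolding is_rainbow_def inj_on_Un by blast
qed

lemma not_covers_Diff_matching:
  assumes "is_matching F" "e \<in> S" "S \<subseteq> F" "v \<in> verts e"
  shows "\<not> covers (F - S) v"
  using assms unfolding is_matching_def covers_def by fastforce

context
  fixes X Y :: "'v set" and C :: "'c set" and E M :: "('v, 'c) cedge set" and n :: nat
    and X' :: "'v set" and es ms :: "('v, 'c) cedge list"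
  assumes setting: "bip_setting X Y C E n"
    and ME: "M \<subseteq> E"
    and sw: "switching E M X' es ms"
begin

lemma switching_length: "length es = length ms" "ms \<noteq> []"
  using sw unfolding switching_def by auto

lemma switching_edges: "set ms \<subseteq> M" "set es \<subseteq> E" "ex ` set es \<subseteq> X'"
  using sw switching_length(1) unfolding switching_def by (auto simp: set_conv_nth)

lemma switching_ms_ex_in: "ex ` set ms \<subseteq> X"
  using switching_edges(1) ME bip_setting_endpoints(1)[OF setting] by (meson image_subsetI subsetD)

lemma switching_meet:
  assumes "i < length ms"
  shows "ey (es ! i) = ey (ms ! i)" "ex (es ! i) \<noteq> ex (ms ! i)"
proof -
  have meet: "verts (es ! i) \<inter> verts (ms ! i) = {ey (ms ! i)}"
    using sw assms unfolding switching_def by auto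
  have "es ! i \<in> E" "ms ! i \<in> E"
    using switching_edges ME assms switching_length(1) by (metis nth_mem subsetD)+
  then have "ex (es ! i) \<in> X" "ey (ms ! i) \<in> Y" "ex (ms ! i) \<in> X"
    using bip_setting_endpoints[OF setting] by auto
  moreover note bip_setting_disjoint[OF setting]
  ultimately have "ey (ms ! i) \<noteq> ex (es ! i)" "ex (ms ! i) \<noteq> ey (ms ! i)" by auto
  moreover have "ey (ms ! i) \<in> verts (es ! i)" "ex (ms ! i) \<notin> verts (es ! i) - {ey (ms ! i)}"
    using meet unfolding verts_def by auto
  ultimately show "ey (es ! i) = ey (ms ! i)" "ex (es ! i) \<noteq> ex (ms ! i)"
    unfolding verts_def by auto
qed

lemma switching_disjoint:
  assumes "i < length ms" "j < length ms" "i \<noteq> j"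
  shows "verts (es ! i) \<inter> verts (es ! j) = {}" "verts (es ! i) \<inter> verts (ms ! j) = {}"
  using sw assms unfolding switching_def by auto

lemma switching_ex_disjoint: "ex ` set es \<inter> ex ` set ms = {}"
proof -
  have "ex (es ! i) \<noteq> ex (ms ! j)" if ij: "i < length ms" "j < length ms" for i j
  proof (cases "i = j")
    case True
    then show ?thesis using switching_meet(2) ij by simp
  next
    case False
    then show ?thesis using switching_disjoint(2)[OF ij False] unfolding verts_def by blast
  qed
  then show ?thesis using switching_length(1) by (auto simp: set_conv_nth)
qed

lemma switching_distinct: "distinct es" "distinct ms"
proof -
  have "i = j" if "i < length ms" "j < length ms" "es ! i = es ! j" for i j
    using switching_disjoint(1)[of i j] that unfolding verts_def by auto
  then show "distinct es" using switching_length(1) unfolding distinct_conv_nth by metis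
  have "i = j" if "i < length ms" "j < length ms" "ms ! i = ms ! j" for i j
    using switching_disjoint(2)[of i j] switching_meet(1)[of i] that unfolding verts_def by auto
  then show "distinct ms" unfolding distinct_conv_nth by metis
qed

lemma switching_col_shift: "1 \<le> i \<Longrightarrow> i < length ms \<Longrightarrow> ecol (es ! i) = ecol (ms ! (i - 1))"
  using sw unfolding switching_def by simp

lemma switching_col_es: "i < length ms \<Longrightarrow> ecol (es ! i) = sw_col es ms i"
  using switching_length(1) unfolding sw_col_def by simp

lemma switching_col_ms: "i < length ms \<Longrightarrow> ecol (ms ! i) = sw_col es ms (Suc i)"
proof (cases "Suc i < length ms")
  case True
  then show ?thesis
    using switching_col_shift[of "Suc i"] switching_length(1) unfolding sw_col_def by simp
next
  case False
  moreover assume "i < length ms"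
  ultimately have "i = length ms - 1" by simp
  then show ?thesis using switching_length unfolding sw_col_def by simp
qed

lemma switching_col_distinct:
  "i \<le> length ms \<Longrightarrow> j \<le> length ms \<Longrightarrow> i \<noteq> j \<Longrightarrow> sw_col es ms i \<noteq> sw_col es ms j"
  using sw unfolding switching_def by auto

lemma switching_col_last: "ecol (last ms) = sw_col es ms (length ms)"
  using switching_col_ms[of "length ms - 1"] switching_length(2)
  by (simp add: last_conv_nth)

lemma switching_ms_col_ne_first: "e \<in> set ms \<Longrightarrow> ecol e \<noteq> ecol (es ! 0)"
  using switching_col_ms switching_col_es[of 0] switching_col_distinct switching_length(2)
  by (auto simp: set_conv_nth)

lemma switching_es_col_ne_last: "e \<in> set es \<Longrightarrow> ecol e \<noteq> ecol (last ms)"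
  using switching_col_es switching_col_last switching_col_distinct switching_length(1)
  by (auto simp: set_conv_nth)

lemma switching_es_col_cases:
  assumes "e \<in> set es"
  shows "ecol e = ecol (es ! 0) \<or> ecol e \<in> ecol ` set ms"
proof -
  obtain i where i: "i < length ms" "e = es ! i"
    using assms switching_length(1) by (auto simp: set_conv_nth)
  show ?thesis
  proof (cases i)
    case (Suc j)
    then have "ecol e = ecol (ms ! j)"
      using switching_col_shift[of i] i by simp
    then show ?thesis using i Suc by auto
  qed (use i in simp)
qed

lemma switching_es_rainbow: "is_rainbow (set es)"
  unfolding is_rainbow_def
proof (rule inj_onI)
  fix e f assume "e \<in> set es" "f \<in> set es" "ecol e = ecol f"
  then obtain i j where "i < length ms" "j < length ms" "e = es ! i" "f = es ! j" "ecol e = ecol f"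
    using switching_length(1) by (metis in_set_conv_nth)
  then show "e = f" using switching_col_es switching_col_distinct by (metis less_imp_le)
qed

context
  fixes M' :: "('v, 'c) cedge set"
  assumes M'_matching: "is_matching M'"
    and ms_in_M': "set ms \<subseteq> M'"
    and es_ends_free: "\<forall>v \<in> ex ` set es. \<not> covers M' v"
begin

lemma switch_along_matching: "is_matching (switch_along M' es ms)"
  unfolding switch_along_def
proof (rule is_matching_Un)
  show "is_matching (M' - set ms)" using M'_matching by (rule is_matching_subset) blast
  show "is_matching (set es)"
    unfolding is_matching_def
  proof (intro ballI impI)
    fix e f assume "e \<in> set es" "f \<in> set es" "e \<noteq> f"
    then obtain i j where "i < length ms" "j < length ms" "i \<noteq> j" "e = es ! i" "f = es ! j"
      using switching_length(1) by (metis in_set_conv_nth)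
    then show "verts e \<inter> verts f = {}" using switching_disjoint(1) by blast
  qed
next
  fix f e assume f: "f \<in> M' - set ms" and e: "e \<in> set es"
  then obtain i where i: "i < length ms" "e = es ! i"
    using switching_length(1) by (metis in_set_conv_nth)
  have "\<not> covers M' (ex e)" using es_ends_free e by blast
  then have "ex e \<notin> verts f" using f unfolding covers_def by blast
  have "\<not> covers (M' - set ms) (ey (ms ! i))"
    by (rule not_covers_Diff_matching[where e = "ms ! i", OF M'_matching _ ms_in_M']) (use i in \<open>simp_all add: verts_def\<close>)
  then have "ey e \<notin> verts f" using f i switching_meet(1) unfolding covers_def by simp
  show "verts f \<inter> verts e = {}"
    using \<open>ex e \<notin> verts f\<close> \<open>ey e \<notin> verts f\<close> unfolding verts_def by auto
qed

lemma switch_along_card: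
  assumes "finite M'"
  shows "card (switch_along M' es ms) = card M'"
proof -
  have "set es \<inter> M' = {}" using es_ends_free unfolding covers_def verts_def by blast
  then have "card (switch_along M' es ms) = card (M' - set ms) + card (set es)"
    unfolding switch_along_def using assms by (subst card_Un_disjoint) auto
  also have "\<dots> = card M'"
    using card_Diff_subset[OF _ ms_in_M'] card_mono[OF assms ms_in_M']
      distinct_card[OF switching_distinct(1)] distinct_card[OF switching_distinct(2)]
      switching_length(1)
    by simp
  finally show ?thesis .
qed

lemma switch_along_not_covers:
  assumes "v \<in> X" "v \<notin> ex ` set es" "v \<in> ex ` set ms \<or> \<not> covers M' v"
  shows "\<not> covers (switch_along M' es ms) v"
proof -
  have "v \<notin> verts e" if "e \<in> set es" for e
  proof -
    have "ey e \<in> Y" using that switching_edges(2) bip_setting_endpoints(2)[OF setting] by blast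
    then show ?thesis
      using assms(1,2) that bip_setting_disjoint[OF setting] unfolding verts_def by blast
  qed
  moreover have "\<not> covers (M' - set ms) v"
    using assms(3) not_covers_Diff_matching[OF M'_matching _ ms_in_M']
    unfolding covers_def verts_def by blast
  ultimately show ?thesis unfolding switch_along_def covers_def by blast
qed

end

lemma switch_along_rainbow:
  assumes M'_rainbow: "is_rainbow M'" and ms_in_M': "set ms \<subseteq> M'"
    and first_col_unused: "\<forall>e\<in>M'. ecol e \<noteq> ecol (es ! 0)"
  shows "is_rainbow (switch_along M' es ms)"
proof -
  have cross: "ecol f \<noteq> ecol e" if f: "f \<in> M'" "f \<notin> set ms" and e: "e \<in> set es" for f e
  proof
    assume same: "ecol f = ecol e"
    from switching_es_col_cases[OF e] show False
    proof
      assume "ecol e = ecol (es ! 0)"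
      then show False using same first_col_unused f by simp
    next
      assume "ecol e \<in> ecol ` set ms"
      then obtain g where g: "g \<in> set ms" "ecol g = ecol f" using same by (metis imageE)
      then have "g = f"
        using M'_rainbow ms_in_M' f unfolding is_rainbow_def by (meson inj_onD subsetD)
      then show False using g f by simp
    qed
  qed
  have "ecol ` (M' - set ms) \<inter> ecol ` set es = {}"
  proof (rule equals0I)
    fix x assume "x \<in> ecol ` (M' - set ms) \<inter> ecol ` set es"
    then obtain f e where "f \<in> M' - set ms" "e \<in> set es" "x = ecol f" "x = ecol e"
      by (meson IntE imageE)
    then show False using cross by (metis DiffE)
  qed
  moreover have "is_rainbow (M' - set ms)"
    using M'_rainbow unfolding is_rainbow_def by (rule inj_on_subset) blast
  ultimately show ?thesis
    unfolding switch_along_def using switching_es_rainbow by (intro is_rainbow_Un)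
qed

lemma switch_along_avoids_last_col:
  assumes M'_rainbow: "is_rainbow M'" and ms_in_M': "set ms \<subseteq> M'"
    and e: "e \<in> switch_along M' es ms"
  shows "ecol e \<noteq> ecol (last ms)"
proof (cases "e \<in> set es")
  case False
  then have e_old: "e \<in> M'" "e \<notin> set ms" using e unfolding switch_along_def by auto
  have "last ms \<in> M'" using ms_in_M' switching_length(2) by auto
  show ?thesis
  proof
    assume "ecol e = ecol (last ms)"
    then have "e = last ms"
      using M'_rainbow e_old(1) \<open>last ms \<in> M'\<close> unfolding is_rainbow_def by (meson inj_onD)
    then show False using e_old(2) switching_length(2) by simp
  qed
qed (rule switching_es_col_ne_last)

lemma switch_along_rainbow_matching:
  assumes M': "rainbow_matching E n M'" and ms_in_M': "set ms \<subseteq> M'"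
    and first_col_unused: "\<forall>e\<in>M'. ecol e \<noteq> ecol (es ! 0)"
    and es_ends_free: "\<forall>v \<in> ex ` set es. \<not> covers M' v"
  shows "rainbow_matching E n (switch_along M' es ms)"
proof -
  have "M' \<subseteq> E" "is_matching M'" "is_rainbow M'" "card M' = n"
    using M' unfolding rainbow_matching_def by auto
  moreover have "finite M'" using \<open>M' \<subseteq> E\<close> bip_setting_finite_edges[OF setting] by (rule finite_subset)
  moreover have "switch_along M' es ms \<subseteq> E"
    using \<open>M' \<subseteq> E\<close> switching_edges(2) unfolding switch_along_def by blast
  ultimately show ?thesis
    using switch_along_matching switch_along_rainbow switch_along_card ms_in_M' first_col_unused es_ends_free
    unfolding rainbow_matching_def by simp
qed

lemma free_switching_extension:
  fixes k :: nat
  assumes fr: "free E n M (real (2 * k)) T c X'"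
    and first_col: "ecol (es ! 0) = c" and len: "length ms \<le> k"
    and A: "A \<subseteq> M - {e \<in> M. ecol e = c}" "card A \<le> k"
    and B: "B \<subseteq> X'" "card B \<le> k"
    and T_disj: "ex ` set ms \<inter> T = {}" "ex ` A \<inter> T = {}"
    and A_disj: "ex ` A \<inter> (B \<union> ex ` set es) = {}"
    and ms_disj: "ex ` set ms \<inter> B = {}"
  obtains M' where "rainbow_matching E n M'" "A \<union> set ms \<subseteq> M'"
    "\<forall>v \<in> B \<union> ex ` set es. \<not> covers M' v" "\<forall>e\<in>M'. ecol e \<noteq> c"
proof -
  let ?A = "A \<union> set ms" and ?B = "B \<union> ex ` set es"
  have A': "?A \<subseteq> M - ({e \<in> M. ex e \<in> T} \<union> {e \<in> M. ecol e = c})"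
    using A(1) T_disj switching_edges(1) switching_ms_col_ne_first first_col by auto
  have card_A': "real (card ?A) \<le> real (2 * k)"
    using card_Un_le[of A "set ms"] card_length[of ms] A(2) len by simp
  have B': "?B \<subseteq> X'" using B(1) switching_edges(3) by blast
  have card_B': "real (card ?B) \<le> real (2 * k)"
    using card_Un_le[of B "ex ` set es"] card_image_le[OF finite_set, of ex es] card_length[of es]
      B(2) len switching_length(1) by simp
  have "ex ` ?A \<inter> ?B = {}"
    using A_disj ms_disj switching_ex_disjoint by blast
  with fr[unfolded free_def, THEN conjunct2, THEN conjunct2, rule_format, OF A' card_A' B' card_B']
  show ?thesis using that by blast
qed

end

theorem mainTheorem10:
  fixes X Y :: "'v set" and C :: "'c set" and E M :: "('v, 'c) cedge set" and n k :: nat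
    and X' T B :: "'v set" and c :: 'c and es ms :: "('v, 'c) cedge list"
    and A :: "('v, 'c) cedge set"
  assumes setting: "bip_setting X Y C E n"
    and M: "rainbow_matching E n M"
    and XT: "X' \<subseteq> X" "T \<subseteq> X"
    and cC: "c \<in> C"
    and fr: "free E n M (real (2 * k)) T c X'"
    and sw: "switching E M X' es ms"
    and from_c: "ecol (es ! 0) = c"
    and len: "length ms \<le> k"
    and A: "A \<subseteq> M - {e \<in> M. ecol e = c}" "card A \<le> k"
    and B: "B \<subseteq> X'" "card B \<le> k"
    and disj: "(ex ` set es \<union> ex ` set ms) \<inter> T = {}"
              "(ex ` set es \<union> ex ` set ms) \<inter> ex ` A = {}"
              "(ex ` set es \<union> ex ` set ms) \<inter> B = {}"
              "T \<inter> ex ` A = {}"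
              "ex ` A \<inter> B = {}"
  shows "\<exists>Mt. rainbow_matching E n Mt \<and>
              (\<forall>e\<in>Mt. ecol e \<noteq> ecol (last ms)) \<and>
              A \<subseteq> Mt \<and>
              (\<forall>v \<in> ex ` set ms \<union> B. \<not> covers Mt v)"
proof -
  have ME: "M \<subseteq> E" using M unfolding rainbow_matching_def by simp
  note switching = setting ME sw
  obtain M' where M': "rainbow_matching E n M'" "A \<union> set ms \<subseteq> M'"
      "\<forall>v \<in> B \<union> ex ` set es. \<not> covers M' v" "\<forall>e\<in>M'. ecol e \<noteq> c"
  proof (rule free_switching_extension[OF switching fr from_c len A B])
    show "ex ` set ms \<inter> T = {}" "ex ` A \<inter> T = {}" using disj(1,4) by auto
    show "ex ` A \<inter> (B \<union> ex ` set es) = {}" using disj(2,5) by auto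
    show "ex ` set ms \<inter> B = {}" using disj(3) by auto
  qed
  then have M'_matching: "is_matching M'" and M'_rainbow: "is_rainbow M'"
    unfolding rainbow_matching_def by simp_all
  have ms_in_M': "set ms \<subseteq> M'" and es_ends_free: "\<forall>v \<in> ex ` set es. \<not> covers M' v"
    using M'(2,3) by auto
  have sigma_in_X: "ex ` set ms \<union> B \<subseteq> X"
    using switching_ms_ex_in[OF switching] B(1) XT(1) by blast
  show ?thesis
  proof (intro exI conjI ballI)
    show "rainbow_matching E n (switch_along M' es ms)"
      using switch_along_rainbow_matching[OF switching M'(1) ms_in_M'] M'(4) from_c es_ends_free by simp
    show "ecol e \<noteq> ecol (last ms)" if "e \<in> switch_along M' es ms" for e
      using switch_along_avoids_last_col[OF switching M'_rainbow ms_in_M' that] .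
    show "A \<subseteq> switch_along M' es ms"
      using M'(2) disj(2) unfolding switch_along_def by blast
    show "\<not> covers (switch_along M' es ms) v" if v: "v \<in> ex ` set ms \<union> B" for v
    proof (rule switch_along_not_covers[OF switching M'_matching ms_in_M' es_ends_free])
      show "v \<in> X" using v sigma_in_X by blast
      show "v \<notin> ex ` set es" using v disj(3) switching_ex_disjoint[OF switching] by blast
      show "v \<in> ex ` set ms \<or> \<not> covers M' v" using v M'(3) by blast
    qed
  qed
qed

end
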